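(* Let $1\le p\le 2$, let $\theta_c\in[0,\frac{\pi}{2}]$ be the angle with $\cos^2\theta_c=\frac{p-1}{p}$, and let $G(\theta)=\cos^{p-1}(\theta)\sin(\theta)$ on $[0,\frac{\pi}{2}]$. Then: (a) $G$ is increasing on $[0,\theta_c]$ and decreasing on $[\theta_c,\frac{\pi}{2}]$. (b) For $0\le\theta\le\frac{\pi}{4}$ we have $G(\frac{\pi}{2}-\theta)\ge G(\theta)$, with equality only at the endpoints. (c) If $1\le p\le 1.73$, then for every $\alpha>0$ with $\theta_c+\alpha<\frac{\pi}{2}$, $G(\theta_c-\alpha)\ge G(\theta_c+\alpha)$. (d) If $1\le p\le 1.73$ and $x\le\theta_c\le y$ (in $[0,\frac{\pi}{2}]$) satisfy $G(x)=G(y)$, then $\frac{1}{2}(x+y)\le\theta_c$. *)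

theory Defs
  imports Complex_Main
begin

text \<open>Isabelle's powr has 0 powr 0 = 0, so the case p = 1 (where cos^0 = 1,
  i.e. G = sin) is treated separately to respect the convention 0^0 = 1.\<close>
definition Gfun :: "real \<Rightarrow> real \<Rightarrow> real" where
  "Gfun p \<theta> = (if p = 1 then sin \<theta> else cos \<theta> powr (p - 1) * sin \<theta>)"

end

theory Submission
  imports Defs
begin

(* With q = p - 1, the function log G = q ln cos + ln sin has derivative
   cot - q tan = (p cos^2 - q) / (sin cos), whose sign is that of cos^2 - cos^2 \<theta>c; this gives (a).
   Since G \<theta> = (sin \<theta> cos \<theta>)^q sin^(2-p) \<theta>, the reflection \<theta> \<mapsto> pi/2 - \<theta> only replaces the
   last factor by cos^(2-p) \<theta>, which gives (b).
   For (c), the derivatives of log G at u = \<theta>c - s and v = \<theta>c + s add up to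
   sin (u + v) (p - 2) sin^2 s / (sin u cos u sin v cos v) \<le> 0, so log G (\<theta>c - s) - log G (\<theta>c + s)
   is nondecreasing in s and vanishes at s = 0. Part (d) follows from (c) and the monotonicity in (a). *)

definition logG :: "real \<Rightarrow> real \<Rightarrow> real" where
  "logG p x = (p - 1) * ln (cos x) + ln (sin x)"

definition logG_deriv :: "real \<Rightarrow> real \<Rightarrow> real" where
  "logG_deriv p x = ((cos x)\<^sup>2 - (p - 1) * (sin x)\<^sup>2) / (sin x * cos x)"

lemma sin_cos_pos:
  assumes "0 < x" "x < pi / 2"
  shows "0 < sin x" "0 < cos x"
  using assms by (auto intro: sin_gt_zero cos_gt_zero_pi)

lemma Gfun_eq_exp_logG:
  assumes "0 < x" "x < pi / 2"
  shows "Gfun p x = exp (logG p x)"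
  using sin_cos_pos[OF assms] by (simp add: Gfun_def logG_def exp_add powr_def)

lemma DERIV_logG:
  assumes "0 < x" "x < pi / 2"
  shows "DERIV (logG p) x :> logG_deriv p x"
proof -
  note pos = sin_cos_pos[OF assms]
  have "DERIV (logG p) x :> (p - 1) * (- sin x / cos x) + cos x / sin x"
    unfolding logG_def[abs_def] using pos by (auto intro!: derivative_eq_intros)
  moreover have "(p - 1) * (- sin x / cos x) + cos x / sin x = logG_deriv p x"
    using pos by (simp add: logG_deriv_def field_simps power2_eq_square)
  ultimately show ?thesis by simp
qed

lemma DERIV_Gfun:
  assumes "0 < x" "x < pi / 2"
  shows "DERIV (Gfun p) x :> Gfun p x * logG_deriv p x"
proof (rule has_field_derivative_transform_within_open[where S = "{0<..<pi/2}"])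
  show "DERIV (\<lambda>x. exp (logG p x)) x :> Gfun p x * logG_deriv p x"
    using DERIV_logG[OF assms] Gfun_eq_exp_logG[OF assms]
    by (auto intro!: derivative_eq_intros)
qed (use assms Gfun_eq_exp_logG in auto)

lemma continuous_on_Gfun:
  assumes "1 \<le> p"
  shows "continuous_on {0..pi/2} (Gfun p)"
proof (cases "p = 1")
  case True
  then show ?thesis by (simp add: Gfun_def[abs_def] continuous_intros)
next
  case False
  have "cos x \<ge> 0" if "x \<in> {0..pi/2}" for x
    using that by (intro cos_ge_zero) auto
  then have "continuous_on {0..pi/2} (\<lambda>x. cos x powr (p - 1))"
    using assms False by (intro continuous_on_powr') (auto intro: continuous_intros)
  then show ?thesis
    using False by (simp add: Gfun_def[abs_def] continuous_intros)
qed

lemma Gfun_pos: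
  assumes "0 < x" "x < pi / 2"
  shows "0 < Gfun p x"
  using Gfun_eq_exp_logG[OF assms] by simp

lemma Gfun_nonneg:
  assumes "0 \<le> x" "x \<le> pi / 2"
  shows "0 \<le> Gfun p x"
  using assms sin_ge_zero[of x] by (auto simp: Gfun_def)

lemma Gfun_pi_half: "p \<noteq> 1 \<Longrightarrow> Gfun p (pi / 2) = 0"
  by (simp add: Gfun_def)

lemma logG_deriv_critical:
  assumes "1 \<le> p" "(cos \<theta>c)\<^sup>2 = (p - 1) / p"
  shows "logG_deriv p x = p * ((cos x)\<^sup>2 - (cos \<theta>c)\<^sup>2) / (sin x * cos x)"
proof -
  have "p * (cos \<theta>c)\<^sup>2 = p - 1"
    using assms by (simp add: field_simps)
  then show ?thesis
    by (simp add: logG_deriv_def sin_squared_eq algebra_simps)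
qed

lemma Gfun_strict_mono_on:
  assumes "1 \<le> p" "0 \<le> \<theta>c" "\<theta>c \<le> pi / 2" "(cos \<theta>c)\<^sup>2 = (p - 1) / p"
  shows "strict_mono_on {0..\<theta>c} (Gfun p)"
proof (rule monotone_onI)
  fix x y assume "x \<in> {0..\<theta>c}" "y \<in> {0..\<theta>c}" "x < y"
  then show "Gfun p x < Gfun p y"
  proof (intro DERIV_pos_imp_increasing_open[OF \<open>x < y\<close>])
    fix z assume "x < z" "z < y"
    then have z: "0 < z" "z < pi / 2" "z < \<theta>c"
      using \<open>x \<in> {0..\<theta>c}\<close> \<open>y \<in> {0..\<theta>c}\<close> assms by auto
    have "cos \<theta>c < cos z"
      using z assms by (subst cos_mono_less_eq) auto
    moreover have "0 \<le> cos \<theta>c"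
      using assms by (intro cos_ge_zero) auto
    ultimately have "(cos \<theta>c)\<^sup>2 < (cos z)\<^sup>2"
      by (intro power_strict_mono) auto
    then have "0 < logG_deriv p z"
      using assms sin_cos_pos[OF z(1,2)] by (simp add: logG_deriv_critical[OF assms(1,4)])
    then show "\<exists>d. DERIV (Gfun p) z :> d \<and> 0 < d"
      using DERIV_Gfun[OF z(1,2)] Gfun_pos[OF z(1,2)] by force
  qed (use assms in \<open>auto intro: continuous_on_subset[OF continuous_on_Gfun[OF assms(1)]]\<close>)
qed

lemma Gfun_strict_antimono_on:
  assumes "1 \<le> p" "0 \<le> \<theta>c" "(cos \<theta>c)\<^sup>2 = (p - 1) / p"
  shows "strict_antimono_on {\<theta>c..pi/2} (Gfun p)"
proof (rule monotone_onI)
  fix x y assume "x \<in> {\<theta>c..pi/2}" "y \<in> {\<theta>c..pi/2}" "x < y"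
  then have "Gfun p y < Gfun p x"
  proof (intro DERIV_neg_imp_decreasing_open[OF \<open>x < y\<close>])
    fix z assume "x < z" "z < y"
    then have z: "0 < z" "z < pi / 2" "\<theta>c < z"
      using \<open>x \<in> {\<theta>c..pi/2}\<close> \<open>y \<in> {\<theta>c..pi/2}\<close> assms by auto
    have "cos z < cos \<theta>c"
      using z assms by (subst cos_mono_less_eq) auto
    then have "(cos z)\<^sup>2 < (cos \<theta>c)\<^sup>2"
      using sin_cos_pos[OF z(1,2)] by (intro power_strict_mono) auto
    then have "logG_deriv p z < 0"
      using assms sin_cos_pos[OF z(1,2)]
      by (simp add: logG_deriv_critical[OF assms(1,3)] divide_neg_pos mult_pos_neg)
    then show "\<exists>d. DERIV (Gfun p) z :> d \<and> d < 0"
      using DERIV_Gfun[OF z(1,2)] Gfun_pos[OF z(1,2)] by (force simp: mult_pos_neg)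
  qed (use \<open>x \<in> {\<theta>c..pi/2}\<close> assms
       in \<open>auto intro: continuous_on_subset[OF continuous_on_Gfun[OF assms(1)]]\<close>)
  then show "Gfun p x > Gfun p y" by simp
qed

lemma Gfun_eq_powr:
  assumes "0 < t" "t < pi / 2"
  shows "Gfun p t = (sin t * cos t) powr (p - 1) * sin t powr (2 - p)"
proof -
  note pos = sin_cos_pos[OF assms]
  have "sin t = sin t powr (p - 1) * sin t powr (2 - p)"
    using pos by (simp flip: powr_add)
  then show ?thesis
    using pos by (simp add: Gfun_def powr_mult mult_ac)
qed

lemma Gfun_reflect_eq_powr:
  assumes "0 < t" "t < pi / 2"
  shows "Gfun p (pi / 2 - t) = (sin t * cos t) powr (p - 1) * cos t powr (2 - p)"
proof -
  have "sin (pi / 2 - t) = cos t" "cos (pi / 2 - t) = sin t"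
    by (simp_all add: sin_diff cos_diff)
  then show ?thesis
    using Gfun_eq_powr[of "pi / 2 - t" p] assms by (simp add: mult.commute)
qed

lemma Gfun_le_Gfun_reflect:
  assumes "p \<le> 2" "0 \<le> t" "t \<le> pi / 4"
  shows "Gfun p t \<le> Gfun p (pi / 2 - t)"
proof (cases "t = 0")
  case True
  then show ?thesis by (simp add: Gfun_nonneg Gfun_def)
next
  case False
  then have t: "0 < t" "t < pi / 2" using assms by auto
  have "sin t \<le> sin (pi / 2 - t)"
    using t assms by (subst sin_mono_le_eq) auto
  then have "sin t powr (2 - p) \<le> cos t powr (2 - p)"
    using sin_cos_pos[OF t] assms by (intro powr_mono2) (auto simp: sin_diff)
  then show ?thesis
    using sin_cos_pos[OF t]
    by (simp add: Gfun_eq_powr[OF t] Gfun_reflect_eq_powr[OF t] mult_left_mono)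
qed

lemma Gfun_less_Gfun_reflect:
  assumes "p < 2" "0 < t" "t < pi / 4"
  shows "Gfun p t < Gfun p (pi / 2 - t)"
proof -
  have t: "0 < t" "t < pi / 2" using assms by auto
  have "sin t < sin (pi / 2 - t)"
    using t assms by (subst sin_mono_less_eq) auto
  then have "sin t powr (2 - p) < cos t powr (2 - p)"
    using sin_cos_pos[OF t] assms by (intro powr_less_mono2) (auto simp: sin_diff)
  then show ?thesis
    using sin_cos_pos[OF t]
    by (simp add: Gfun_eq_powr[OF t] Gfun_reflect_eq_powr[OF t])
qed

lemma logG_deriv_add:
  assumes "sin u \<noteq> 0" "cos u \<noteq> 0" "sin v \<noteq> 0" "cos v \<noteq> 0"
  shows "logG_deriv p u + logG_deriv p v =
    sin (u + v) * (cos u * cos v - (p - 1) * (sin u * sin v)) / (sin u * cos u * (sin v * cos v))"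
proof -
  have "((cos u)\<^sup>2 - (p - 1) * (sin u)\<^sup>2) * (sin v * cos v)
      + ((cos v)\<^sup>2 - (p - 1) * (sin v)\<^sup>2) * (sin u * cos u)
      = sin (u + v) * (cos u * cos v - (p - 1) * (sin u * sin v))"
    unfolding sin_add by algebra
  then show ?thesis
    using assms by (simp add: logG_deriv_def add_frac_eq)
qed

lemma cos_cos_minus_sin_sin_critical:
  fixes p \<theta>c s :: real
  assumes "1 \<le> p" "(cos \<theta>c)\<^sup>2 = (p - 1) / p"
  shows "cos (\<theta>c - s) * cos (\<theta>c + s) - (p - 1) * (sin (\<theta>c - s) * sin (\<theta>c + s))
    = (p - 2) * (sin s)\<^sup>2"
proof -
  have crit: "p * (cos \<theta>c)\<^sup>2 = p - 1"
    using assms by simp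
  have cc: "cos (\<theta>c - s) * cos (\<theta>c + s) = (cos \<theta>c)\<^sup>2 - (sin s)\<^sup>2"
    unfolding cos_diff cos_add using sin_cos_squared_add[of \<theta>c] sin_cos_squared_add[of s] by algebra
  have ss: "sin (\<theta>c - s) * sin (\<theta>c + s) = 1 - (cos \<theta>c)\<^sup>2 - (sin s)\<^sup>2"
    unfolding sin_diff sin_add using sin_cos_squared_add[of \<theta>c] sin_cos_squared_add[of s] by algebra
  show ?thesis
    unfolding cc ss using crit by algebra
qed

lemma logG_critical_reflect_le:
  fixes p \<theta>c a :: real
  assumes "1 \<le> p" "p \<le> 2" "(cos \<theta>c)\<^sup>2 = (p - 1) / p"
    and "0 \<le> a" "0 < \<theta>c - a" "\<theta>c + a < pi / 2"
  shows "logG p (\<theta>c + a) \<le> logG p (\<theta>c - a)"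
proof -
  define h where "h s = logG p (\<theta>c - s) - logG p (\<theta>c + s)" for s
  have "h 0 \<le> h a"
  proof (rule DERIV_nonneg_imp_nondecreasing[OF \<open>0 \<le> a\<close>])
    fix s assume "0 \<le> s" "s \<le> a"
    then have u: "0 < \<theta>c - s" "\<theta>c - s < pi / 2" and v: "0 < \<theta>c + s" "\<theta>c + s < pi / 2"
      using assms by auto
    have "DERIV (\<lambda>s. logG p (\<theta>c - s)) s :> logG_deriv p (\<theta>c - s) * (- 1)"
      by (rule DERIV_chain2[where g = "\<lambda>s. \<theta>c - s", OF DERIV_logG[OF u]]) (auto intro!: derivative_eq_intros)
    moreover have "DERIV (\<lambda>s. logG p (\<theta>c + s)) s :> logG_deriv p (\<theta>c + s) * 1"
      by (rule DERIV_chain2[where g = "\<lambda>s. \<theta>c + s", OF DERIV_logG[OF v]]) (auto intro!: derivative_eq_intros)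
    ultimately have "DERIV h s :> - (logG_deriv p (\<theta>c - s) + logG_deriv p (\<theta>c + s))"
      unfolding h_def[abs_def] by (auto intro: derivative_eq_intros)
    moreover have "logG_deriv p (\<theta>c - s) + logG_deriv p (\<theta>c + s) \<le> 0"
    proof -
      note su = sin_cos_pos[OF u] and sv = sin_cos_pos[OF v]
      have "0 \<le> sin ((\<theta>c - s) + (\<theta>c + s))"
        using u v by (intro sin_ge_zero) auto
      moreover have "(p - 2) * (sin s)\<^sup>2 \<le> 0"
        using assms by (simp add: mult_nonpos_nonneg)
      ultimately show ?thesis
        using su sv
        by (simp add: logG_deriv_add cos_cos_minus_sin_sin_critical[OF assms(1,3)]
            divide_nonpos_pos mult_nonneg_nonpos)
    qed
    ultimately show "\<exists>d. DERIV h s :> d \<and> 0 \<le> d"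
      by force
  qed
  then show ?thesis
    by (simp add: h_def)
qed

lemma critical_angle_ge_pi_quarter:
  assumes "1 \<le> p" "p \<le> 2" "0 \<le> \<theta>c" "(cos \<theta>c)\<^sup>2 = (p - 1) / p"
  shows "pi / 4 \<le> \<theta>c"
proof (rule ccontr)
  assume "\<not> pi / 4 \<le> \<theta>c"
  then have "cos (pi / 4) < cos \<theta>c"
    using assms by (subst cos_mono_less_eq) auto
  then have "(sqrt 2 / 2)\<^sup>2 < (cos \<theta>c)\<^sup>2"
    by (intro power_strict_mono) (auto simp: cos_45)
  then have "1 / 2 < (p - 1) / p"
    using assms by (simp add: power_divide)
  then show False
    using assms by (simp add: field_simps)
qed

lemma Gfun_critical_reflect_le:
  assumes "1 \<le> p" "p \<le> 2" "0 \<le> \<theta>c" "(cos \<theta>c)\<^sup>2 = (p - 1) / p"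
    and "0 \<le> a" "\<theta>c + a \<le> pi / 2"
  shows "Gfun p (\<theta>c + a) \<le> Gfun p (\<theta>c - a)"
proof -
  have "pi / 4 \<le> \<theta>c"
    using critical_angle_ge_pi_quarter assms by blast
  consider "a = 0" | "0 < a" "\<theta>c + a < pi / 2" | "0 < a" "\<theta>c + a = pi / 2"
    using assms by linarith
  then show ?thesis
  proof cases
    case 1
    then show ?thesis by simp
  next
    case 2
    then have "logG p (\<theta>c + a) \<le> logG p (\<theta>c - a)"
      using \<open>pi / 4 \<le> \<theta>c\<close> assms by (intro logG_critical_reflect_le) auto
    then show ?thesis
      using 2 \<open>pi / 4 \<le> \<theta>c\<close> assms by (simp add: Gfun_eq_exp_logG)
  next
    case 3
    then have "0 < cos \<theta>c"
      using assms by (intro cos_gt_zero_pi) auto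
    then have "p \<noteq> 1"
      using assms(4) by auto
    moreover have "0 \<le> Gfun p (\<theta>c - a)"
      using 3 \<open>pi / 4 \<le> \<theta>c\<close> by (intro Gfun_nonneg) auto
    ultimately show ?thesis
      using Gfun_pi_half 3(2) by metis
  qed
qed

lemma Gfun_level_set_midpoint_le:
  assumes "1 \<le> p" "p \<le> 2" "0 \<le> \<theta>c" "\<theta>c \<le> pi / 2" "(cos \<theta>c)\<^sup>2 = (p - 1) / p"
    and "0 \<le> x" "x \<le> \<theta>c" "\<theta>c \<le> y" "y \<le> pi / 2" "Gfun p x = Gfun p y"
  shows "(x + y) / 2 \<le> \<theta>c"
proof -
  have "pi / 4 \<le> \<theta>c"
    using critical_angle_ge_pi_quarter assms by blast
  have "Gfun p x \<le> Gfun p (2 * \<theta>c - y)"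
    using Gfun_critical_reflect_le[of p \<theta>c "y - \<theta>c"] assms by simp
  moreover have "x \<in> {0..\<theta>c}" "2 * \<theta>c - y \<in> {0..\<theta>c}"
    using \<open>pi / 4 \<le> \<theta>c\<close> assms by auto
  ultimately have "x \<le> 2 * \<theta>c - y"
    using strict_mono_on_less_eq[OF Gfun_strict_mono_on[OF assms(1,3,4,5)]] by blast
  then show ?thesis
    by simp
qed

theorem lemma2p3:
  fixes p \<theta>c :: real
  assumes hp: "1 \<le> p" "p \<le> 2"
    and hc: "0 \<le> \<theta>c" "\<theta>c \<le> pi / 2" "(cos \<theta>c)\<^sup>2 = (p - 1) / p"
  shows "(strict_mono_on {0..\<theta>c} (Gfun p) \<and> strict_antimono_on {\<theta>c..pi/2} (Gfun p))
    \<and> (\<forall>\<theta>. 0 \<le> \<theta> \<and> \<theta> \<le> pi / 4 \<longrightarrow>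
           Gfun p (pi / 2 - \<theta>) \<ge> Gfun p \<theta> \<and>
           (p < 2 \<and> Gfun p (pi / 2 - \<theta>) = Gfun p \<theta> \<longrightarrow> \<theta> = 0 \<or> \<theta> = pi / 4))
    \<and> (p \<le> 173 / 100 \<longrightarrow>
           (\<forall>\<alpha>. \<alpha> > 0 \<and> \<theta>c + \<alpha> < pi / 2 \<longrightarrow> Gfun p (\<theta>c - \<alpha>) \<ge> Gfun p (\<theta>c + \<alpha>)))
    \<and> (p \<le> 173 / 100 \<longrightarrow>
           (\<forall>x y. 0 \<le> x \<and> x \<le> \<theta>c \<and> \<theta>c \<le> y \<and> y \<le> pi / 2 \<and> Gfun p x = Gfun p y
              \<longrightarrow> (x + y) / 2 \<le> \<theta>c))"
proof (intro conjI allI impI)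
  show "strict_mono_on {0..\<theta>c} (Gfun p)"
    using Gfun_strict_mono_on hp hc by blast
  show "strict_antimono_on {\<theta>c..pi/2} (Gfun p)"
    using Gfun_strict_antimono_on hp hc by blast
  fix \<theta> assume "0 \<le> \<theta> \<and> \<theta> \<le> pi / 4"
  then show "Gfun p (pi / 2 - \<theta>) \<ge> Gfun p \<theta>"
    and "p < 2 \<and> Gfun p (pi / 2 - \<theta>) = Gfun p \<theta> \<Longrightarrow> \<theta> = 0 \<or> \<theta> = pi / 4"
    using Gfun_le_Gfun_reflect[of p \<theta>] Gfun_less_Gfun_reflect[of p \<theta>] hp by force+
next
  fix \<alpha> assume "\<alpha> > 0 \<and> \<theta>c + \<alpha> < pi / 2"
  then show "Gfun p (\<theta>c - \<alpha>) \<ge> Gfun p (\<theta>c + \<alpha>)"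
    using Gfun_critical_reflect_le hp hc by simp
next
  fix x y assume "0 \<le> x \<and> x \<le> \<theta>c \<and> \<theta>c \<le> y \<and> y \<le> pi / 2 \<and> Gfun p x = Gfun p y"
  then show "(x + y) / 2 \<le> \<theta>c"
    using Gfun_level_set_midpoint_le hp hc by blast
qed

end
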